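(* Let $\Omega\subset\mathbb{R}^2$ be open, $\lambda>0$, and let $u\in L^2(\Omega)$ satisfy $-\Delta u=\lambda u$ in $\Omega$. Let $\mathbf{x}_0\in\Omega$, $h>0$, $\alpha\in(0,1)$, and let $\mathbf{e}^-,\mathbf{e}^+$ be unit vectors such that the angle from $\mathbf{e}^-$ to $\mathbf{e}^+$ is $\alpha\pi$; put $\Gamma^\pm=\{\mathbf{x}_0+t\mathbf{e}^\pm:0\le t\le h\}\subset\Omega$. Suppose $\Gamma^-$ and $\Gamma^+$ are generalized singular lines of $u$ with constant parameters $\eta_1\equiv C_1$ on $\Gamma^-$ and $\eta_2\equiv C_2$ on $\Gamma^+$. Let $n\in\mathbb{N}$, $n\ge3$. If $u(\mathbf{x}_0)=0$ and $\alpha\neq q/p$ for all integers $1\le q<p\le n-1$, then $u$ vanishes up to the order $n$ at $\mathbf{x}_0$, i.e. all partial derivatives of $u$ of order at most $n-1$ vanish at $\mathbf{x}_0$.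
   Context: No boundary condition is imposed on $\partial\Omega$; $u$ is real-analytic in $\Omega$. A line segment $\Gamma\subset\Omega$ is a generalized singular line of $u$ with parameter $\eta$ (a complex-valued function on $\Gamma$ not identically zero; here a nonzero complex constant) if $\partial_\nu u+\eta u=0$ on $\Gamma$, $\nu$ a unit normal vector to $\Gamma$. "Vanishes up to order $n$ at $\mathbf{x}_0$" means every homogeneous term of degree $<n$ in the Taylor expansion of $u$ at $\mathbf{x}_0$ is zero. *)

theory Defs
  imports "HOL-Analysis.Analysis"
begin

text \<open>The plane R^2 is identified with the complex numbers: the point (x,y) is x + i y.
  Functions u on (subsets of) the plane are complex-valued.\<close>

definition dir_deriv :: "(complex \<Rightarrow> complex) \<Rightarrow> complex \<Rightarrow> complex \<Rightarrow> complex" where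
  "dir_deriv f v z = vector_derivative (\<lambda>t::real. f (z + of_real t * v)) (at 0)"

definition pdx :: "(complex \<Rightarrow> complex) \<Rightarrow> complex \<Rightarrow> complex" where
  "pdx f = dir_deriv f 1"

definition pdy :: "(complex \<Rightarrow> complex) \<Rightarrow> complex \<Rightarrow> complex" where
  "pdy f = dir_deriv f \<i>"

definition pd :: "nat \<Rightarrow> nat \<Rightarrow> (complex \<Rightarrow> complex) \<Rightarrow> complex \<Rightarrow> complex" where
  "pd i j f = (pdx ^^ i) ((pdy ^^ j) f)"

definition smooth_on :: "(complex \<Rightarrow> complex) \<Rightarrow> complex set \<Rightarrow> bool" where
  "smooth_on f S \<longleftrightarrow> (\<forall>i j. \<forall>z\<in>S. pd i j f differentiable (at z))"

definition laplacian :: "(complex \<Rightarrow> complex) \<Rightarrow> complex \<Rightarrow> complex" where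
  "laplacian f z = pdx (pdx f) z + pdy (pdy f) z"

text \<open>Segment {x0 + t e : 0 <= t <= h} is a generalized singular line of u with constant
  parameter C, unit normal nu = i e.\<close>
definition gen_singular_line_const ::
  "(complex \<Rightarrow> complex) \<Rightarrow> complex \<Rightarrow> complex \<Rightarrow> real \<Rightarrow> complex \<Rightarrow> bool" where
  "gen_singular_line_const u x0 e h C \<longleftrightarrow>
     C \<noteq> 0 \<and> (\<forall>t\<in>{0..h}. dir_deriv u (\<i> * e) (x0 + of_real t * e) + C * u (x0 + of_real t * e) = 0)"

definition vanishes_up_to_order :: "(complex \<Rightarrow> complex) \<Rightarrow> nat \<Rightarrow> complex \<Rightarrow> bool" where
  "vanishes_up_to_order u n x0 \<longleftrightarrow> (\<forall>i j. i + j < n \<longrightarrow> pd i j u x0 = 0)"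

end

theory Submission
  imports Defs
begin

text \<open>If u vanishes at x0 to order exactly N, then by the Helmholtz equation the degree N
  Taylor term of u at x0 is harmonic, hence of the form A z^N + B (cnj z)^N with z = w - x0.
  Differentiating the boundary condition d_nu u + C u = 0 of a singular line with direction e
  N - 1 times along the line kills the term C u, which vanishes to order N, and leaves
  A e^N = B (cnj e)^N. A second line with direction e w, w = cis (alpha pi), gives the same
  relation for e w; as N alpha is not an integer, w^N differs from (cnj w)^N, so A = B = 0,
  contradicting the choice of N.\<close>

lemma has_derivative_line:
  "((\<lambda>s::real. p + of_real s * v) has_derivative (\<lambda>d. of_real d * v)) (at t)"
proof -
  have "bounded_linear (\<lambda>s::real. of_real s * v)"
    using bounded_linear_scaleR_left[of v] by (simp add: scaleR_conv_of_real)
  then show ?thesis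
    using has_derivative_add[OF has_derivative_const[of p] bounded_linear_imp_has_derivative] by simp
qed

lemma has_vector_derivative_along_line:
  assumes "(f has_derivative F) (at (p + of_real t * v))"
  shows "((\<lambda>s. f (p + of_real s * v)) has_vector_derivative F v) (at t)"
proof -
  have "((f \<circ> (\<lambda>s::real. p + of_real s * v)) has_derivative (F \<circ> (\<lambda>d. of_real d * v))) (at t)"
    by (rule diff_chain_at[OF has_derivative_line assms])
  moreover have "F \<circ> (\<lambda>d. of_real d * v) = (\<lambda>d. d *\<^sub>R F v)"
  proof
    fix d :: real
    have "linear F" using assms has_derivative_linear by blast
    then show "(F \<circ> (\<lambda>d. of_real d * v)) d = d *\<^sub>R F v"
      by (simp add: scaleR_conv_of_real[symmetric] linear_scale)
  qed
  ultimately show ?thesis by (simp add: has_vector_derivative_def o_def)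
qed

lemma dir_deriv_eq_frechet_derivative:
  assumes "f differentiable (at w)"
  shows "dir_deriv f v w = frechet_derivative f (at w) v"
proof -
  have "(f has_derivative frechet_derivative f (at w)) (at (w + of_real 0 * v))"
    using frechet_derivative_works[THEN iffD1, OF assms] by simp
  from has_vector_derivative_along_line[OF this] show ?thesis
    unfolding dir_deriv_def by (simp add: vector_derivative_at)
qed

lemma has_vector_derivative_dir_deriv:
  assumes "f differentiable (at (p + of_real t * v))"
  shows "((\<lambda>s. f (p + of_real s * v)) has_vector_derivative dir_deriv f v (p + of_real t * v)) (at t)"
  using has_vector_derivative_along_line[OF frechet_derivative_works[THEN iffD1, OF assms]]
    dir_deriv_eq_frechet_derivative[OF assms] by simp

lemma dir_deriv_eq_pdx_pdy:
  assumes "f differentiable (at w)"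
  shows "dir_deriv f v w = of_real (Re v) * pdx f w + of_real (Im v) * pdy f w"
proof -
  let ?F = "frechet_derivative f (at w)"
  have lin: "linear ?F" using assms frechet_derivative_works has_derivative_linear by blast
  have v: "v = Re v *\<^sub>R 1 + Im v *\<^sub>R \<i>" by (simp add: complex_eq_iff)
  have "?F v = Re v *\<^sub>R ?F 1 + Im v *\<^sub>R ?F \<i>"
    by (subst v) (simp add: linear_add[OF lin] linear_scale[OF lin])
  then show ?thesis using assms
    by (simp add: dir_deriv_eq_frechet_derivative pdx_def pdy_def scaleR_conv_of_real)
qed

lemma dir_deriv_cong_open:
  assumes "open S" "z \<in> S" "\<And>w. w \<in> S \<Longrightarrow> f w = g w"
  shows "dir_deriv f v z = dir_deriv g v z"
proof -
  let ?T = "{t::real. z + of_real t * v \<in> S}"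
  have "open ((\<lambda>t::real. z + of_real t * v) -` S)"
    by (rule continuous_open_vimage[OF assms(1)]) (auto intro!: continuous_intros)
  then have T: "open ?T" by (simp add: vimage_def)
  have 0: "0 \<in> ?T" using assms by simp
  have "((\<lambda>t. f (z + of_real t * v)) has_vector_derivative D) (at 0) \<longleftrightarrow>
        ((\<lambda>t. g (z + of_real t * v)) has_vector_derivative D) (at 0)" for D
    using has_vector_derivative_transform_within_open[OF _ T 0] assms(3)
    by (metis (mono_tags, lifting) mem_Collect_eq)
  then show ?thesis unfolding dir_deriv_def vector_derivative_def by simp
qed

lemma dir_deriv_linear_combination:
  assumes "f differentiable (at z)" "g differentiable (at z)"
  shows "dir_deriv (\<lambda>w. a * f w + b * g w) v z = a * dir_deriv f v z + b * dir_deriv g v z"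
proof -
  have "((\<lambda>s. a * f (z + of_real s * v) + b * g (z + of_real s * v)) has_vector_derivative
          a * dir_deriv f v z + b * dir_deriv g v z) (at 0)"
    using has_vector_derivative_dir_deriv[of f z 0 v] has_vector_derivative_dir_deriv[of g z 0 v] assms
    by (auto intro!: has_vector_derivative_add has_vector_derivative_mult_right)
  then show ?thesis unfolding dir_deriv_def by (simp add: vector_derivative_at)
qed

section \<open>Symmetry of mixed second derivatives\<close>

lemma norm_increment_le_vector_derivative_bound:
  fixes \<phi> :: "real \<Rightarrow> 'a::real_inner"
  assumes "0 < h" and "\<And>s. s \<in> {0..h} \<Longrightarrow> (\<phi> has_vector_derivative \<phi>' s) (at s)"
    and "\<And>s. s \<in> {0..h} \<Longrightarrow> norm (\<phi>' s) \<le> K"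
  shows "norm (\<phi> h - \<phi> 0) \<le> h * K"
proof -
  have "continuous_on {0..h} \<phi>"
    using assms(2) by (intro continuous_at_imp_continuous_on ballI has_vector_derivative_continuous) auto
  then obtain x where "x \<in> {0<..<h}" "norm (\<phi> h - \<phi> 0) \<le> norm ((h - 0) *\<^sub>R \<phi>' x)"
    using mvt_general[OF assms(1), of \<phi> "\<lambda>s t. t *\<^sub>R \<phi>' s"] assms(2)
    unfolding has_vector_derivative_def by auto
  moreover have "norm ((h - 0) *\<^sub>R \<phi>' x) \<le> h * K"
    using assms(1) assms(3)[of x] \<open>x \<in> {0<..<h}\<close> by (simp add: mult_left_mono)
  ultimately show ?thesis by linarith
qed

lemma linear_approx_difference:
  assumes "linear F"
    and "\<And>y. norm (y - z) < d \<Longrightarrow> norm (g y - g z - F (y - z)) \<le> c * norm (y - z)"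
    and "norm (x - z) < d" "norm (y - z) < d"
  shows "norm (g x - g y - F (x - y)) \<le> c * (norm (x - z) + norm (y - z))"
proof -
  have "g x - g y - F (x - y) = (g x - g z - F (x - z)) - (g y - g z - F (y - z))"
    using linear_diff[OF assms(1), of "x - z" "y - z"] by (simp add: algebra_simps)
  also have "norm \<dots> \<le> norm (g x - g z - F (x - z)) + norm (g y - g z - F (y - z))"
    by (rule norm_triangle_ineq4)
  finally show ?thesis using assms(2)[OF assms(3)] assms(2)[OF assms(4)] by (simp add: distrib_left)
qed

text \<open>Mean value argument for s \<mapsto> f (z + h w + s v) - f (z + s v), whose derivative
  D_v f (z + h w + s v) - D_v f (z + s v) is close to h D_w D_v f z by the linearization of
  D_v f at z.\<close>
lemma second_difference_bound:
  fixes f :: "complex \<Rightarrow> complex"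
  assumes fd: "\<And>p. p \<in> ball z r \<Longrightarrow> f differentiable (at p)"
    and lin: "linear F"
    and dH: "\<And>y. norm (y - z) < d \<Longrightarrow> norm (dir_deriv f v y - dir_deriv f v z - F (y - z)) \<le> c * norm (y - z)"
    and v: "norm v = 1" and w: "norm w = 1" and c: "c \<ge> 0" and h: "0 < h" "h < min d r / 2"
  shows "norm (f (z + of_real h * v + of_real h * w) - f (z + of_real h * v) - f (z + of_real h * w) + f z
          - of_real (h\<^sup>2) * F w) \<le> 3 * c * h\<^sup>2"
proof -
  let ?g = "dir_deriv f v"
  define y1 where "y1 s = z + of_real h * w + of_real s * v" for s :: real
  define y2 where "y2 s = z + of_real s * v" for s :: real
  define \<phi> where "\<phi> s = f (y1 s) - f (y2 s) - of_real s * (of_real h * F w)" for s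
  have near: "norm (y1 s - z) \<le> 2 * h" "norm (y2 s - z) \<le> h" if "s \<in> {0..h}" for s
    using that norm_triangle_ineq[of "of_real h * w" "of_real s * v"] v w h
    by (auto simp: y1_def y2_def norm_mult add.assoc)
  have der: "(\<phi> has_vector_derivative ?g (y1 s) - ?g (y2 s) - of_real h * F w) (at s)"
    if "s \<in> {0..h}" for s
  proof -
    have "y1 s \<in> ball z r" "y2 s \<in> ball z r"
      using near[OF that] h by (auto simp: dist_norm norm_minus_commute)
    then have d1: "((\<lambda>s. f (y1 s)) has_vector_derivative ?g (y1 s)) (at s)"
      and d2: "((\<lambda>s. f (y2 s)) has_vector_derivative ?g (y2 s)) (at s)"
      using has_vector_derivative_dir_deriv[of f "z + of_real h * w" s v]
        has_vector_derivative_dir_deriv[of f z s v] fd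
      unfolding y1_def y2_def by auto
    have d3: "((\<lambda>s. of_real s * (of_real h * F w)) has_vector_derivative of_real h * F w) (at s)"
      using has_vector_derivative_mult_left[OF has_vector_derivative_of_real[OF DERIV_ident]]
      by simp
    show ?thesis unfolding \<phi>_def[abs_def] by (intro has_vector_derivative_diff d1 d2 d3)
  qed
  have bound: "norm (?g (y1 s) - ?g (y2 s) - of_real h * F w) \<le> 3 * c * h" if "s \<in> {0..h}" for s
  proof -
    have "F (y1 s - y2 s) = of_real h * F w"
      using linear_scale[OF lin, of h w] by (simp add: y1_def y2_def scaleR_conv_of_real)
    then have "norm (?g (y1 s) - ?g (y2 s) - of_real h * F w) \<le> c * (norm (y1 s - z) + norm (y2 s - z))"
      using linear_approx_difference[OF lin dH, where x="y1 s" and y="y2 s"] near[OF that] h by simp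
    also have "\<dots> \<le> c * (2 * h + h)"
      using near[OF that] c by (intro mult_left_mono add_mono) auto
    finally show ?thesis by simp
  qed
  have "norm (\<phi> h - \<phi> 0) \<le> h * (3 * c * h)"
    using norm_increment_le_vector_derivative_bound[OF h(1),
        where \<phi>' = "\<lambda>s. ?g (y1 s) - ?g (y2 s) - of_real h * F w"] der bound
    by blast
  moreover have "\<phi> h - \<phi> 0 = f (z + of_real h * v + of_real h * w) - f (z + of_real h * v)
      - f (z + of_real h * w) + f z - of_real (h\<^sup>2) * F w"
    unfolding \<phi>_def y1_def y2_def by (simp add: algebra_simps power2_eq_square)
  ultimately show ?thesis by (simp add: power2_eq_square mult_ac)
qed

lemma second_difference_approx:
  fixes f :: "complex \<Rightarrow> complex"
  assumes S: "open S" "z \<in> S" and fd: "\<And>p. p \<in> S \<Longrightarrow> f differentiable (at p)"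
    and gd: "dir_deriv f v differentiable (at z)" and v: "norm v = 1" and w: "norm w = 1"
    and e: "\<epsilon> > 0"
  shows "\<exists>\<delta>>0. \<forall>h. 0 < h \<and> h < \<delta> \<longrightarrow>
     norm (f (z + of_real h * v + of_real h * w) - f (z + of_real h * v) - f (z + of_real h * w) + f z
           - of_real (h\<^sup>2) * dir_deriv (dir_deriv f v) w z) \<le> \<epsilon> * h\<^sup>2"
proof -
  obtain F where F: "(dir_deriv f v has_derivative F) (at z)" using gd differentiable_def by blast
  have lin: "linear F" using F has_derivative_linear by blast
  have second: "dir_deriv (dir_deriv f v) w z = F w"
    using dir_deriv_eq_frechet_derivative[OF gd] frechet_derivative_at[OF F] by simp
  have "\<epsilon>/3 > 0" using e by simp
  then obtain d where "d > 0" and dH: "\<And>y. norm (y - z) < d \<Longrightarrow>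
      norm (dir_deriv f v y - dir_deriv f v z - F (y - z)) \<le> \<epsilon>/3 * norm (y - z)"
    using F unfolding has_derivative_at_alt by blast
  obtain r where "r > 0" "ball z r \<subseteq> S" using S open_contains_ball by blast
  then have "\<And>p. p \<in> ball z r \<Longrightarrow> f differentiable (at p)" using fd by blast
  from second_difference_bound[OF this lin dH v w] e
  show ?thesis unfolding second using \<open>d > 0\<close> \<open>r > 0\<close>
    by (intro exI[of _ "min d r / 2"]) auto
qed

lemma pdy_pdx_eq_pdx_pdy:
  fixes f :: "complex \<Rightarrow> complex"
  assumes S: "open S" "z \<in> S" and fd: "\<And>p. p \<in> S \<Longrightarrow> f differentiable (at p)"
    and dx: "pdx f differentiable (at z)" and dy: "pdy f differentiable (at z)"
  shows "pdy (pdx f) z = pdx (pdy f) z"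
proof (rule ccontr)
  let ?P = "pdy (pdx f) z" and ?Q = "pdx (pdy f) z"
  assume ne: "?P \<noteq> ?Q"
  define \<epsilon> where "\<epsilon> = norm (?P - ?Q) / 4"
  have e: "\<epsilon> > 0" using ne by (simp add: \<epsilon>_def)
  define \<Delta> where "\<Delta> h = f (z + of_real h * 1 + of_real h * \<i>) - f (z + of_real h * 1)
      - f (z + of_real h * \<i>) + f z" for h
  have \<Delta>_swap: "\<Delta> h = f (z + of_real h * \<i> + of_real h * 1) - f (z + of_real h * \<i>)
      - f (z + of_real h * 1) + f z" for h
    unfolding \<Delta>_def by (simp add: algebra_simps)
  obtain d1 where "d1 > 0" and approx_P: "\<And>h. 0 < h \<Longrightarrow> h < d1 \<Longrightarrow>
      norm (\<Delta> h - of_real (h\<^sup>2) * ?P) \<le> \<epsilon> * h\<^sup>2"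
    using second_difference_approx[OF S fd, of 1 \<i> \<epsilon>] dx e unfolding pdx_def pdy_def \<Delta>_def by auto
  obtain d2 where "d2 > 0" and approx_Q: "\<And>h. 0 < h \<Longrightarrow> h < d2 \<Longrightarrow>
      norm (\<Delta> h - of_real (h\<^sup>2) * ?Q) \<le> \<epsilon> * h\<^sup>2"
    using second_difference_approx[OF S fd, of \<i> 1 \<epsilon>] dy e unfolding pdx_def pdy_def \<Delta>_swap
    by auto
  define h where "h = min d1 d2 / 2"
  have h: "0 < h" "h < d1" "h < d2" using \<open>d1 > 0\<close> \<open>d2 > 0\<close> by (auto simp: h_def)
  have "(\<Delta> h - of_real (h\<^sup>2) * ?Q) - (\<Delta> h - of_real (h\<^sup>2) * ?P) = of_real (h\<^sup>2) * (?P - ?Q)"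
    by (simp add: algebra_simps)
  then have "h\<^sup>2 * norm (?P - ?Q) = norm ((\<Delta> h - of_real (h\<^sup>2) * ?Q) - (\<Delta> h - of_real (h\<^sup>2) * ?P))"
    by (simp only: norm_mult norm_of_real) simp
  also have "\<dots> \<le> 2 * \<epsilon> * h\<^sup>2"
    using norm_triangle_ineq4[of "\<Delta> h - of_real (h\<^sup>2) * ?Q" "\<Delta> h - of_real (h\<^sup>2) * ?P"]
      approx_P[OF h(1,2)] approx_Q[OF h(1,3)] by linarith
  finally have "h\<^sup>2 * norm (?P - ?Q) \<le> h\<^sup>2 * (norm (?P - ?Q) / 2)"
    by (simp add: \<epsilon>_def)
  then show False using h(1) ne by simp
qed

lemma pdx_conv_dir_deriv: "pdx = (\<lambda>f. dir_deriv f 1)"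
  by (rule ext) (simp add: pdx_def)

lemma pdy_conv_dir_deriv: "pdy = (\<lambda>f. dir_deriv f \<i>)"
  by (rule ext) (simp add: pdy_def)

lemma pd_0_0 [simp]: "pd 0 0 f = f"
  by (simp add: pd_def)

lemma pd_pdy: "pd i j (pdy f) = pd i (Suc j) f"
  by (simp add: pd_def funpow_Suc_right del: funpow.simps)

lemma pd_pdy_iter: "pd i j ((pdy ^^ k) f) = pd i (j + k) f"
  by (simp add: pd_def funpow_add)

lemma iter_dir_deriv_cong_open:
  assumes "open S" "\<And>w. w \<in> S \<Longrightarrow> f w = g w" "w \<in> S"
  shows "((\<lambda>F. dir_deriv F v) ^^ k) f w = ((\<lambda>F. dir_deriv F v) ^^ k) g w"
  using assms(3)
proof (induction k arbitrary: w)
  case (Suc k)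
  have "dir_deriv (((\<lambda>F. dir_deriv F v) ^^ k) f) v w = dir_deriv (((\<lambda>F. dir_deriv F v) ^^ k) g) v w"
    by (rule dir_deriv_cong_open[OF assms(1) Suc.prems Suc.IH])
  then show ?case by simp
qed (use assms(2) in simp)

lemma pd_cong_open:
  assumes "open S" "\<And>w. w \<in> S \<Longrightarrow> f w = g w" "w \<in> S"
  shows "pd i j f w = pd i j g w"
proof -
  have "(pdy ^^ j) f w = (pdy ^^ j) g w" if "w \<in> S" for w
    unfolding pdy_conv_dir_deriv by (rule iter_dir_deriv_cong_open[OF assms(1,2) that])
  then show ?thesis
    unfolding pd_def pdx_conv_dir_deriv by (rule iter_dir_deriv_cong_open[OF assms(1) _ assms(3)])
qed

lemma differentiable_cong_open:
  assumes "open S" "w \<in> S" "\<And>w. w \<in> S \<Longrightarrow> f w = g w" "f differentiable (at w)"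
  shows "g differentiable (at w)"
  using assms has_derivative_transform_within_open unfolding differentiable_def by metis

lemma smooth_on_cong_open:
  assumes "open S" "\<And>w. w \<in> S \<Longrightarrow> f w = g w" "smooth_on f S"
  shows "smooth_on g S"
  unfolding smooth_on_def
proof (intro allI ballI)
  fix i j z assume z: "z \<in> S"
  have "pd i j f w = pd i j g w" if "w \<in> S" for w
    using assms(1,2) that by (rule pd_cong_open)
  moreover have "pd i j f differentiable (at z)"
    using assms(3) z unfolding smooth_on_def by blast
  ultimately show "pd i j g differentiable (at z)"
    by (rule differentiable_cong_open[OF assms(1) z])
qed

lemma smooth_on_differentiable: "smooth_on f S \<Longrightarrow> z \<in> S \<Longrightarrow> f differentiable (at z)"
  unfolding smooth_on_def using pd_0_0 by metis

lemma smooth_on_pdy: "smooth_on f S \<Longrightarrow> smooth_on (pdy f) S"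
  unfolding smooth_on_def pd_pdy by blast

lemma smooth_on_pdy_iter: "smooth_on f S \<Longrightarrow> smooth_on ((pdy ^^ j) f) S"
  by (induction j) (auto intro: smooth_on_pdy)

lemma pdy_iter_pdx_commute:
  assumes S: "open S" and sm: "smooth_on f S" and w: "w \<in> S"
  shows "(pdy ^^ j) (pdx f) w = pdx ((pdy ^^ j) f) w"
  using w
proof (induction j arbitrary: w)
  case (Suc j)
  have "pdy ((pdy ^^ j) (pdx f)) w = pdy (pdx ((pdy ^^ j) f)) w"
    unfolding pdy_def[of "(pdy ^^ j) (pdx f)"] pdy_def[of "pdx ((pdy ^^ j) f)"]
    using S Suc.prems Suc.IH by (rule dir_deriv_cong_open)
  also have "\<dots> = pdx (pdy ((pdy ^^ j) f)) w"
  proof (rule pdy_pdx_eq_pdx_pdy[OF S Suc.prems])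
    show "\<And>p. p \<in> S \<Longrightarrow> (pdy ^^ j) f differentiable at p"
      using smooth_on_differentiable[OF smooth_on_pdy_iter[OF sm]] by blast
    have "pd 1 j f differentiable (at w)" "pd 0 (Suc j) f differentiable (at w)"
      using sm Suc.prems unfolding smooth_on_def by blast+
    then show "pdx ((pdy ^^ j) f) differentiable at w" "pdy ((pdy ^^ j) f) differentiable at w"
      by (simp_all add: pd_def)
  qed
  finally show ?case by simp
qed simp

lemma pd_pdx:
  assumes "open S" "smooth_on f S" "w \<in> S"
  shows "pd i j (pdx f) w = pd (Suc i) j f w"
proof -
  have "(pdx ^^ i) ((pdy ^^ j) (pdx f)) w = (pdx ^^ i) (pdx ((pdy ^^ j) f)) w"
    unfolding pdx_conv_dir_deriv
    by (rule iter_dir_deriv_cong_open[OF assms(1) _ assms(3)])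
       (use pdy_iter_pdx_commute[OF assms(1,2)] in \<open>simp add: pdx_conv_dir_deriv\<close>)
  then show ?thesis by (simp add: pd_def funpow_Suc_right del: funpow.simps)
qed

lemma smooth_on_pdx:
  assumes "open S" "smooth_on f S"
  shows "smooth_on (pdx f) S"
  unfolding smooth_on_def
proof (intro allI ballI)
  fix i j z assume z: "z \<in> S"
  have "pd (Suc i) j f w = pd i j (pdx f) w" if "w \<in> S" for w
    using pd_pdx[OF assms that] by simp
  moreover have "pd (Suc i) j f differentiable (at z)"
    using assms(2) z unfolding smooth_on_def by blast
  ultimately show "pd i j (pdx f) differentiable (at z)"
    by (rule differentiable_cong_open[OF assms(1) z])
qed

lemma smooth_on_pd: "open S \<Longrightarrow> smooth_on f S \<Longrightarrow> smooth_on (pd i j f) S"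
  by (induction i) (auto simp: pd_def smooth_on_pdy_iter smooth_on_pdx)

lemma iter_dir_deriv_linear_combination:
  assumes S: "open S" and w: "w \<in> S"
    and d: "\<And>k z. k < n \<Longrightarrow> z \<in> S \<Longrightarrow> ((\<lambda>F. dir_deriv F v) ^^ k) f differentiable (at z) \<and>
                              ((\<lambda>F. dir_deriv F v) ^^ k) g differentiable (at z)"
  shows "((\<lambda>F. dir_deriv F v) ^^ n) (\<lambda>w. a * f w + b * g w) w
    = a * ((\<lambda>F. dir_deriv F v) ^^ n) f w + b * ((\<lambda>F. dir_deriv F v) ^^ n) g w"
  using w d
proof (induction n arbitrary: w)
  case (Suc n)
  let ?D = "\<lambda>F. dir_deriv F v"
  have "?D ((?D ^^ n) (\<lambda>w. a * f w + b * g w)) w = ?D (\<lambda>w. a * (?D ^^ n) f w + b * (?D ^^ n) g w) w"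
    using S Suc.prems(1)
  proof (rule dir_deriv_cong_open)
    fix z assume "z \<in> S"
    then show "(?D ^^ n) (\<lambda>w. a * f w + b * g w) z = a * (?D ^^ n) f z + b * (?D ^^ n) g z"
      using Suc.IH Suc.prems(2) by simp
  qed
  also have "\<dots> = a * (?D ^^ Suc n) f w + b * (?D ^^ Suc n) g w"
    using dir_deriv_linear_combination Suc.prems by simp
  finally show ?case by simp
qed simp

lemma pd_linear_combination:
  assumes S: "open S" and sf: "smooth_on f S" and sg: "smooth_on g S" and w: "w \<in> S"
  shows "pd i j (\<lambda>w. a * f w + b * g w) w = a * pd i j f w + b * pd i j g w"
proof -
  have d: "pd i k f differentiable (at z) \<and> pd i k g differentiable (at z)" if "z \<in> S" for i k z
    using sf sg that unfolding smooth_on_def by blast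
  have pdy_iter: "(pdy ^^ j) (\<lambda>w. a * f w + b * g w) w = a * (pdy ^^ j) f w + b * (pdy ^^ j) g w"
    if "w \<in> S" for w
    unfolding pdy_conv_dir_deriv
    by (rule iter_dir_deriv_linear_combination[OF S that])
       (use d[of _ 0] in \<open>simp add: pd_def pdy_conv_dir_deriv\<close>)
  have "pd i j (\<lambda>w. a * f w + b * g w) w = (pdx ^^ i) (\<lambda>w. a * (pdy ^^ j) f w + b * (pdy ^^ j) g w) w"
    unfolding pd_def pdx_conv_dir_deriv by (rule iter_dir_deriv_cong_open[OF S pdy_iter w])
  also have "\<dots> = a * pd i j f w + b * pd i j g w"
    unfolding pd_def pdx_conv_dir_deriv
    by (rule iter_dir_deriv_linear_combination[OF S w])
       (use d[of _ _ j] in \<open>simp add: pd_def pdx_conv_dir_deriv\<close>)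
  finally show ?thesis .
qed

lemma smooth_on_linear_combination:
  assumes "open S" "smooth_on f S" "smooth_on g S"
  shows "smooth_on (\<lambda>w. a * f w + b * g w) S"
  unfolding smooth_on_def
proof (intro allI ballI)
  fix i j z assume z: "z \<in> S"
  have "a * pd i j f w + b * pd i j g w = pd i j (\<lambda>w. a * f w + b * g w) w" if "w \<in> S" for w
    using pd_linear_combination[OF assms that] by simp
  moreover have "(\<lambda>w. a * pd i j f w + b * pd i j g w) differentiable (at z)"
    using assms(2,3) z unfolding smooth_on_def
    by (intro differentiable_add differentiable_mult differentiable_const) auto
  ultimately show "pd i j (\<lambda>w. a * f w + b * g w) differentiable (at z)"
    by (rule differentiable_cong_open[OF assms(1) z])
qed

lemma smooth_on_dir_deriv:
  assumes "open S" "smooth_on f S"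
  shows "smooth_on (dir_deriv f v) S"
  by (rule smooth_on_cong_open[of S "\<lambda>w. of_real (Re v) * pdx f w + of_real (Im v) * pdy f w"])
     (use assms in \<open>auto simp: dir_deriv_eq_pdx_pdy smooth_on_differentiable
       intro!: smooth_on_linear_combination smooth_on_pdx smooth_on_pdy\<close>)

lemma smooth_on_iter_dir_deriv:
  "open S \<Longrightarrow> smooth_on f S \<Longrightarrow> smooth_on (((\<lambda>F. dir_deriv F v) ^^ m) f) S"
  by (induction m) (auto intro: smooth_on_dir_deriv)

lemma pd_dir_deriv:
  assumes S: "open S" and sm: "smooth_on f S" and w: "w \<in> S"
  shows "pd i j (dir_deriv f v) w = of_real (Re v) * pd (Suc i) j f w + of_real (Im v) * pd i (Suc j) f w"
proof -
  have "pd i j (dir_deriv f v) w = pd i j (\<lambda>w. of_real (Re v) * pdx f w + of_real (Im v) * pdy f w) w"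
    by (rule pd_cong_open[OF S _ w]) (simp add: dir_deriv_eq_pdx_pdy smooth_on_differentiable[OF sm])
  also have "\<dots> = of_real (Re v) * pd i j (pdx f) w + of_real (Im v) * pd i j (pdy f) w"
    by (rule pd_linear_combination[OF S smooth_on_pdx[OF S sm] smooth_on_pdy[OF sm] w])
  finally show ?thesis using pd_pdx[OF S sm w] by (simp add: pd_pdy)
qed

section \<open>The leading homogeneous term\<close>

text \<open>The Taylor expansion of f at x0 begins with (A z^k + B (cnj z)^k) / k!, where z = w - x0:
  the mixed derivative d_x^(k-j) d_y^j of z^k is k! i^j, that of (cnj z)^k is k! (-i)^j.\<close>
definition leading_term :: "(complex \<Rightarrow> complex) \<Rightarrow> complex \<Rightarrow> nat \<Rightarrow> complex \<Rightarrow> complex \<Rightarrow> bool" where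
  "leading_term f x0 k A B \<longleftrightarrow> vanishes_up_to_order f k x0 \<and>
     (\<forall>j\<le>k. pd (k - j) j f x0 = A * \<i> ^ j + B * (- \<i>) ^ j)"

lemma leading_term_dir_deriv:
  assumes S: "open S" and x0: "x0 \<in> S" and sm: "smooth_on f S"
    and lt: "leading_term f x0 (Suc k) A B"
  shows "leading_term (dir_deriv f v) x0 k (A * v) (B * cnj v)"
proof -
  have pd_eq: "pd i j (dir_deriv f v) x0
      = of_real (Re v) * pd (Suc i) j f x0 + of_real (Im v) * pd i (Suc j) f x0" for i j
    by (rule pd_dir_deriv[OF S sm x0])
  have low: "pd i j f x0 = 0" if "i + j < Suc k" for i j
    using lt that unfolding leading_term_def vanishes_up_to_order_def by blast
  have top: "pd (Suc k - j) j f x0 = A * \<i> ^ j + B * (- \<i>) ^ j" if "j \<le> Suc k" for j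
    using lt that unfolding leading_term_def by blast
  have "pd (k - j) j (dir_deriv f v) x0 = A * v * \<i> ^ j + B * cnj v * (- \<i>) ^ j" if "j \<le> k" for j
  proof -
    have v: "v = of_real (Re v) + \<i> * of_real (Im v)" "cnj v = of_real (Re v) - \<i> * of_real (Im v)"
      by (simp_all add: complex_eq_iff)
    have "pd (k - j) j (dir_deriv f v) x0 = of_real (Re v) * (A * \<i> ^ j + B * (- \<i>) ^ j)
        + of_real (Im v) * (A * \<i> ^ j * \<i> + B * (- \<i>) ^ j * (- \<i>))"
      using top[of j] top[of "Suc j"] that by (simp add: pd_eq Suc_diff_le mult_ac)
    also have "\<dots> = A * v * \<i> ^ j + B * cnj v * (- \<i>) ^ j"
      by (subst (1 2) v) (simp add: algebra_simps)
    finally show ?thesis .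
  qed
  then show ?thesis
    using low unfolding leading_term_def vanishes_up_to_order_def by (simp add: pd_eq)
qed

lemma leading_term_iter_dir_deriv:
  assumes "open S" "x0 \<in> S" "smooth_on f S" "leading_term f x0 (m + k) A B"
  shows "leading_term (((\<lambda>F. dir_deriv F v) ^^ m) f) x0 k (A * v ^ m) (B * cnj v ^ m)"
  using assms(4)
proof (induction m arbitrary: k)
  case (Suc m)
  then have "leading_term (((\<lambda>F. dir_deriv F v) ^^ m) f) x0 (Suc k) (A * v ^ m) (B * cnj v ^ m)"
    by simp
  from leading_term_dir_deriv[OF assms(1,2) smooth_on_iter_dir_deriv[OF assms(1,3)] this, of v]
  show ?case by (simp add: mult_ac)
qed simp

lemma leading_term_0_value: "leading_term f x0 0 A B \<Longrightarrow> f x0 = A + B"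
  unfolding leading_term_def by auto

lemma pd_helmholtz:
  assumes S: "open S" and sm: "smooth_on u S"
    and pde: "\<forall>z\<in>S. - laplacian u z = of_real lam * u z" and x0: "x0 \<in> S"
  shows "pd (i + 2) j u x0 + pd i (j + 2) u x0 = - of_real lam * pd i j u x0"
proof -
  \<comment> \<open>both sides written in the shape of pd_linear_combination\<close>
  have "pd i j (\<lambda>w. 1 * pd 2 0 u w + 1 * pd 0 2 u w) x0 = pd i j (\<lambda>w. (- of_real lam) * u w + 0 * u w) x0"
  proof (rule pd_cong_open[OF S _ x0])
    fix w assume "w \<in> S"
    then have "- laplacian u w = of_real lam * u w" using pde by blast
    then have "laplacian u w = - (of_real lam * u w)" by (metis minus_minus)
    then show "1 * pd 2 0 u w + 1 * pd 0 2 u w = - of_real lam * u w + 0 * u w"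
      by (simp add: laplacian_def pd_def numeral_2_eq_2)
  qed
  moreover have "pd i j (pd 2 0 u) x0 = pd (i + 2) j u x0"
    using pd_pdx[OF S smooth_on_pdx[OF S sm] x0, of i j] pd_pdx[OF S sm x0, of "Suc i" j]
    by (simp add: pd_def numeral_2_eq_2)
  moreover have "pd i j (pd 0 2 u) x0 = pd i (j + 2) u x0"
    using pd_pdy_iter[of i j 2 u] by (simp add: pd_def)
  ultimately show ?thesis
    using pd_linear_combination[OF S smooth_on_pd[OF S sm] smooth_on_pd[OF S sm] x0, of i j 1 2 0 1 0 2]
      pd_linear_combination[OF S sm sm x0, of i j "- of_real lam" 0]
    by simp
qed

text \<open>The recursion c(i+2,j) + c(i,j+2) = -L c(i,j) collapses on the lowest non-vanishing order
  to c(N-j-2, j+2) = -c(N-j, j), whose solutions are exactly A i^j + B (-i)^j.\<close>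
lemma helmholtz_leading_coefficients:
  fixes c :: "nat \<Rightarrow> nat \<Rightarrow> complex"
  assumes rec: "\<And>i j. c (i + 2) j + c i (j + 2) = - L * c i j"
    and low: "\<And>i j. i + j < N \<Longrightarrow> c i j = 0"
    and "j \<le> N"
  shows "c (N - j) j = (c N 0 - \<i> * c (N - 1) 1) / 2 * \<i> ^ j + (c N 0 + \<i> * c (N - 1) 1) / 2 * (- \<i>) ^ j"
  using \<open>j \<le> N\<close>
proof (induction j rule: less_induct)
  case (less j)
  consider "j = 0" | "j = 1" | k where "j = Suc (Suc k)"
    by (metis One_nat_def not0_implies_Suc)
  then show ?case
  proof cases
    case 3
    have "c (N - (k + 2) + 2) k + c (N - (k + 2)) (k + 2) = - L * c (N - (k + 2)) k" by (rule rec)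
    moreover have "c (N - (k + 2)) k = 0" using low less.prems 3 by simp
    moreover have "N - (k + 2) + 2 = N - k" using less.prems 3 by simp
    ultimately have "c (N - j) j = - c (N - k) k" using 3 by (simp add: eq_neg_iff_add_eq_0 add.commute)
    then show ?thesis using less.IH[of k] less.prems 3 by (simp add: power_Suc)
  qed (simp_all add: field_simps)
qed

lemma helmholtz_leading_term:
  assumes "open S" "smooth_on u S" "\<forall>z\<in>S. - laplacian u z = of_real lam * u z" "x0 \<in> S"
    and "vanishes_up_to_order u N x0"
  obtains A B where "leading_term u x0 N A B"
proof
  show "leading_term u x0 N ((pd N 0 u x0 - \<i> * pd (N - 1) 1 u x0) / 2) ((pd N 0 u x0 + \<i> * pd (N - 1) 1 u x0) / 2)"
    unfolding leading_term_def
    using helmholtz_leading_coefficients[of "\<lambda>i j. pd i j u x0", OF pd_helmholtz[OF assms(1-4)]]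
      assms(5) unfolding vanishes_up_to_order_def by blast
qed

section \<open>Generalized singular lines\<close>

lemma iter_dir_deriv_zero_at_segment_start:
  assumes S: "open S" and sm: "smooth_on g S" and h: "h > 0"
    and seg: "\<And>t. t \<in> {0..h} \<Longrightarrow> x0 + of_real t * e \<in> S"
    and zero: "\<And>t. t \<in> {0..h} \<Longrightarrow> g (x0 + of_real t * e) = 0"
  shows "((\<lambda>F. dir_deriv F e) ^^ k) g x0 = 0"
proof -
  let ?G = "\<lambda>k s. ((\<lambda>F. dir_deriv F e) ^^ k) g (x0 + of_real s * e)"
  have diff: "((\<lambda>F. dir_deriv F e) ^^ k) g differentiable (at (x0 + of_real t * e))"
    if "t \<in> {0..h}" for k t
    using smooth_on_differentiable[OF smooth_on_iter_dir_deriv[OF S sm] seg[OF that]] .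
  have interior: "?G k t = 0" if "t \<in> {0<..<h}" for t
    using that
  proof (induction k arbitrary: t)
    case (Suc k)
    have "(?G k has_vector_derivative ?G (Suc k) t) (at t)"
      using has_vector_derivative_dir_deriv[OF diff] Suc.prems by simp
    moreover have "(?G k has_vector_derivative 0) (at t)"
    proof (rule has_vector_derivative_transform_within_open[OF has_vector_derivative_const
          open_greaterThanLessThan Suc.prems])
      fix s assume "s \<in> {0<..<h}"
      then show "0 = ?G k s" by (rule Suc.IH[symmetric])
    qed
    ultimately show ?case by (rule vector_derivative_unique_at)
  qed (use zero in simp)
  have "isCont (?G k) 0"
    using has_vector_derivative_continuous[OF has_vector_derivative_dir_deriv[OF diff]] h by simp
  then have "(?G k \<longlongrightarrow> ?G k 0) (at_right 0)"
    unfolding isCont_def using filterlim_at_split by blast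
  moreover have "eventually (\<lambda>s. ?G k s = 0) (at_right 0)"
    by (rule eventually_at_rightI[OF _ h]) (rule interior)
  then have "(?G k \<longlongrightarrow> 0) (at_right 0)"
    by (rule tendsto_eventually)
  ultimately have "?G k 0 = 0"
    by (rule tendsto_unique[OF trivial_limit_at_right_real])
  then show ?thesis by simp
qed

lemma closed_segment_point:
  assumes "h > 0" "t \<in> {0..h}"
  shows "x0 + of_real t * e \<in> closed_segment x0 (x0 + of_real h * e)"
proof -
  have "of_real (t / h) * (of_real h * e) = of_real (t / h * h) * e"
    by (simp only: of_real_mult mult.assoc)
  then have "(t / h) *\<^sub>R (of_real h * e) = of_real t * e"
    using assms(1) by (simp add: scaleR_conv_of_real)
  then have "x0 + of_real t * e = (1 - t / h) *\<^sub>R x0 + (t / h) *\<^sub>R (x0 + of_real h * e)"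
    by (simp add: algebra_simps)
  then show ?thesis
    using assms unfolding in_segment by (intro exI[of _ "t / h"]) auto
qed

lemma singular_line_leading_term:
  assumes S: "open S" and sm: "smooth_on u S" and x0: "x0 \<in> S"
    and lt: "leading_term u x0 (Suc M) A B" and h: "h > 0"
    and seg: "closed_segment x0 (x0 + of_real h * e) \<subseteq> S"
    and line: "gen_singular_line_const u x0 e h C"
  shows "A * e ^ Suc M = B * cnj e ^ Suc M"
proof -
  \<comment> \<open>g is d_nu u + C u, written in the shape of pd_linear_combination\<close>
  define g where "g w = 1 * dir_deriv u (\<i> * e) w + C * u w" for w
  have sm_g: "smooth_on g S"
    unfolding g_def[abs_def] by (rule smooth_on_linear_combination[OF S smooth_on_dir_deriv[OF S sm] sm])
  have lt_dd: "leading_term (dir_deriv u (\<i> * e)) x0 M (A * (\<i> * e)) (B * cnj (\<i> * e))"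
    by (rule leading_term_dir_deriv[OF S x0 sm lt])
  have "pd i j g x0 = pd i j (dir_deriv u (\<i> * e)) x0" if "i + j \<le> M" for i j
    using pd_linear_combination[OF S smooth_on_dir_deriv[OF S sm] sm x0, of i j 1 "\<i> * e" C] lt that
    unfolding g_def[abs_def] leading_term_def vanishes_up_to_order_def by simp
  then have "leading_term g x0 (M + 0) (A * (\<i> * e)) (B * cnj (\<i> * e))"
    using lt_dd unfolding leading_term_def vanishes_up_to_order_def by simp
  from leading_term_0_value[OF leading_term_iter_dir_deriv[OF S x0 sm_g this, of e]]
  have "((\<lambda>F. dir_deriv F e) ^^ M) g x0 = \<i> * (A * e ^ Suc M - B * cnj e ^ Suc M)"
    by (simp add: algebra_simps)
  moreover have "((\<lambda>F. dir_deriv F e) ^^ M) g x0 = 0"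
  proof (rule iter_dir_deriv_zero_at_segment_start[OF S sm_g h])
    fix t :: real assume "t \<in> {0..h}"
    then show "x0 + of_real t * e \<in> S" "g (x0 + of_real t * e) = 0"
      using seg closed_segment_point[OF h] line unfolding gen_singular_line_const_def g_def by auto
  qed
  ultimately show ?thesis by simp
qed

section \<open>Two singular lines meeting at the angle alpha pi\<close>

lemma sin_mult_neq_zero_of_not_rational:
  fixes \<alpha> :: real
  assumes "0 < \<alpha>" "\<alpha> < 1" "N \<ge> 1"
    and not_rational: "\<And>q. 1 \<le> q \<Longrightarrow> q < N \<Longrightarrow> \<alpha> \<noteq> real q / real N"
  shows "sin (real N * (\<alpha> * pi)) \<noteq> 0"
proof
  assume "sin (real N * (\<alpha> * pi)) = 0"
  then obtain q :: int where "real N * (\<alpha> * pi) = of_int q * pi"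
    unfolding sin_zero_iff_int2 by blast
  then have q: "real N * \<alpha> = of_int q" by simp
  have "0 < real N * \<alpha>" "real N * \<alpha> < real N" using assms(1-3) by auto
  then have "1 \<le> nat q" "nat q < N" using q by linarith+
  moreover have "\<alpha> = real (nat q) / real N" using q \<open>1 \<le> nat q\<close> assms(3) by (simp add: field_simps)
  ultimately show False using not_rational by blast
qed

lemma cis_pow_neq_cnj_pow:
  assumes "sin (real N * t) \<noteq> 0"
  shows "cis t ^ N \<noteq> cnj (cis t) ^ N"
proof
  assume "cis t ^ N = cnj (cis t) ^ N"
  then have "cis (real N * t) = cis (- (real N * t))"
    by (simp add: Complex.DeMoivre cis_cnj)
  then have "Im (cis (real N * t)) = Im (cis (- (real N * t)))"
    by simp
  then show False using assms by simp
qed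

lemma coefficients_zero_of_two_directions:
  fixes A B e w :: complex
  assumes "A * e ^ N = B * cnj e ^ N" "A * (e * w) ^ N = B * cnj (e * w) ^ N"
    and "e \<noteq> 0" "w ^ N \<noteq> cnj w ^ N"
  shows "A = 0 \<and> B = 0"
proof -
  have "A * e ^ N * w ^ N = B * cnj e ^ N * cnj w ^ N"
    using assms(2) by (simp add: power_mult_distrib mult_ac)
  also have "\<dots> = A * e ^ N * cnj w ^ N"
    using assms(1) by simp
  finally have "A * e ^ N * (w ^ N - cnj w ^ N) = 0"
    by (simp add: algebra_simps)
  then have "A = 0" using assms(3,4) by simp
  then show ?thesis using assms(1,3) by simp
qed

lemma exists_lowest_nonvanishing_order:
  assumes "\<not> vanishes_up_to_order f n x0"
  obtains N i j where "N < n" "vanishes_up_to_order f N x0" "i + j = N" "pd i j f x0 \<noteq> 0"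
proof -
  define P where "P k \<longleftrightarrow> (\<exists>i j. i + j = k \<and> pd i j f x0 \<noteq> 0)" for k
  obtain i0 j0 where "i0 + j0 < n" "P (i0 + j0)"
    using assms unfolding vanishes_up_to_order_def P_def by blast
  moreover have "vanishes_up_to_order f (Least P) x0"
    unfolding vanishes_up_to_order_def using not_less_Least P_def by blast
  ultimately show ?thesis
    using that LeastI[of P] Least_le[of P] unfolding P_def by (meson le_less_trans)
qed

theorem theorem3p1:
  fixes \<Omega> :: "complex set" and u :: "complex \<Rightarrow> complex" and lam :: real
    and x0 em ep C1 C2 :: complex and h \<alpha> :: real and n :: nat
  assumes "open \<Omega>" and "lam > 0"
    and "smooth_on u \<Omega>"
    and "(\<lambda>z. (cmod (u z))\<^sup>2) integrable_on \<Omega>"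
    and "\<forall>z\<in>\<Omega>. - laplacian u z = of_real lam * u z"
    and "x0 \<in> \<Omega>" and "h > 0" and "0 < \<alpha>" and "\<alpha> < 1"
    and "cmod em = 1" and "cmod ep = 1"
    and "ep = em * cis (\<alpha> * pi) \<or> em = ep * cis (\<alpha> * pi)"
    and "closed_segment x0 (x0 + of_real h * em) \<subseteq> \<Omega>"
    and "closed_segment x0 (x0 + of_real h * ep) \<subseteq> \<Omega>"
    and "gen_singular_line_const u x0 em h C1"
    and "gen_singular_line_const u x0 ep h C2"
    and "n \<ge> 3"
    and "u x0 = 0"
    and "\<forall>p q::nat. 1 \<le> q \<and> q < p \<and> p \<le> n - 1 \<longrightarrow> \<alpha> \<noteq> real q / real p"
  shows "vanishes_up_to_order u n x0"
proof (rule ccontr)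
  assume "\<not> vanishes_up_to_order u n x0"
  then obtain N i j where N: "N < n" "vanishes_up_to_order u N x0"
    and ij: "i + j = N" "pd i j u x0 \<noteq> 0"
    by (rule exists_lowest_nonvanishing_order)
  obtain M where M: "N = Suc M" using ij \<open>u x0 = 0\<close> by (cases N) auto
  obtain A B where lt: "leading_term u x0 N A B"
    using helmholtz_leading_term[OF assms(1,3,5,6) N(2)] .
  have "A * em ^ N = B * cnj em ^ N" "A * ep ^ N = B * cnj ep ^ N"
    using singular_line_leading_term[OF assms(1,3,6) _ assms(7)] lt assms(13-16) unfolding M by blast+
  moreover have "sin (real N * (\<alpha> * pi)) \<noteq> 0"
    by (rule sin_mult_neq_zero_of_not_rational[OF assms(8,9)])
       (use M N(1) assms(19) in \<open>auto simp del: of_nat_Suc\<close>)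
  then have "cis (\<alpha> * pi) ^ N \<noteq> cnj (cis (\<alpha> * pi)) ^ N"
    by (rule cis_pow_neq_cnj_pow)
  ultimately have "A = 0 \<and> B = 0"
    using assms(10-12) coefficients_zero_of_two_directions by (metis norm_zero zero_neq_one)
  moreover have "pd (N - j) j u x0 = A * \<i> ^ j + B * (- \<i>) ^ j"
    using lt le_add2[of j i] unfolding leading_term_def ij(1) by blast
  ultimately show False using ij(2) by (simp add: ij(1)[symmetric])
qed

end
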